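(* Let $p$ be any prime and let $F_{at}:\mathbb{F}_p^2\to\mathbb{F}_p^2$ be the map $F_{at}(x,y)=(x^2y,\;x^2y+xy^2)$, where $\mathbb{F}_p=\mathbb{Z}/p\mathbb{Z}$. Then the $p$-th iterate $F_{at}^{\circ p}$ sends every point of $\mathbb{F}_p^2$ to $(0,0)$.
   Context: $F_{at}$ is the reduction modulo $p$ of the integer polynomial map $(x,y)\mapsto(x^2y,\,x^2y+xy^2)$ (called the "additive trap"); $F_{at}^{\circ p}$ denotes its $p$-fold composition with itself. *)

theory Defs
  imports "HOL-Number_Theory.Number_Theory"
begin

text \<open>The additive trap over F_p, with F_p represented by the residues {0..<p}
  of the integers (arithmetic reduced mod p).\<close>
definition F_at :: "int \<Rightarrow> int \<times> int \<Rightarrow> int \<times> int" where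
  "F_at p = (\<lambda>(x, y). ((x^2 * y) mod p, (x^2 * y + x * y^2) mod p))"

end

theory Submission
  imports Defs
begin

text \<open>Writing \<open>F(x,y) = (x\<^sup>2y, xy(x + y))\<close>, one step sends the slope \<open>y/x\<close> to \<open>1 + y/x\<close>.
  So if \<open>x, y \<noteq> 0\<close> and \<open>y + t x \<equiv> 0\<close> with \<open>0 < t < p\<close>, after \<open>t\<close> steps the second coordinate
  is a multiple of \<open>y + t x\<close>, hence zero, and one further step reaches the fixed point \<open>(0,0)\<close>.
  If \<open>x = 0\<close> or \<open>y = 0\<close> a single step already does.\<close>

lemma funpow_F_at_origin: "(F_at p ^^ n) (0, 0) = (0, 0)"
  by (induction n) (auto simp: F_at_def)

lemma funpow_F_at_absorbing:
  assumes "(F_at p ^^ n) v = (0, 0)" and "n \<le> m"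
  shows "(F_at p ^^ m) v = (0, 0)"
proof -
  have "(F_at p ^^ m) v = (F_at p ^^ (m - n)) ((F_at p ^^ n) v)"
    using \<open>n \<le> m\<close> by (metis funpow_add le_add_diff_inverse2 o_apply)
  then show ?thesis
    using assms(1) funpow_F_at_origin by simp
qed

lemma F_at_axis:
  assumes "x = 0 \<or> y = 0"
  shows "F_at p (x, y) = (0, 0)"
  using assms by (auto simp: F_at_def)

lemma F_at_slope_shift:
  fixes p x y c :: int
  shows "[snd (F_at p (x, y)) + c * fst (F_at p (x, y)) = x * y * (y + (c + 1) * x)] (mod p)"
proof -
  have "[snd (F_at p (x, y)) + c * fst (F_at p (x, y)) = (x\<^sup>2 * y + x * y\<^sup>2) + c * (x\<^sup>2 * y)] (mod p)"
    unfolding F_at_def cong_def by (simp add: mod_add_left_eq) (metis mod_add_right_eq mod_mult_right_eq)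
  also have "(x\<^sup>2 * y + x * y\<^sup>2) + c * (x\<^sup>2 * y) = x * y * (y + (c + 1) * x)"
    by (simp add: power2_eq_square algebra_simps)
  finally show ?thesis .
qed

lemma funpow_F_at_vanishes:
  fixes p x y :: int
  assumes "p dvd y + int (Suc k) * x"
  shows "(F_at p ^^ Suc (Suc k)) (x, y) = (0, 0)"
  using assms
proof (induction k arbitrary: x y)
  case 0
  then have "p dvd x * y * (y + (0 + 1) * x)"
    by simp
  then have "p dvd snd (F_at p (x, y))"
    using F_at_slope_shift[of p x y 0] by (simp add: cong_dvd_iff)
  then have "F_at p (x, y) = (fst (F_at p (x, y)), 0)"
    by (simp add: F_at_def dvd_eq_mod_eq_0)
  then show ?case
    by (metis F_at_axis funpow_0 funpow.simps(2) o_apply)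
next
  case (Suc k)
  obtain x' y' where step: "F_at p (x, y) = (x', y')"
    by fastforce
  have "p dvd x * y * (y + (int (Suc k) + 1) * x)"
    using Suc.prems by (simp add: add.commute)
  then have "p dvd y' + int (Suc k) * x'"
    using F_at_slope_shift[of p x y "int (Suc k)"] step by (simp add: cong_dvd_iff)
  then have "(F_at p ^^ Suc (Suc k)) (x', y') = (0, 0)"
    by (rule Suc.IH)
  then show ?case
    using step by (simp only: funpow_Suc_right o_apply)
qed

lemma exists_residue_dvd_add_mult:
  fixes p x y :: int
  assumes "prime p" and "\<not> p dvd x"
  obtains t where "t \<in> {0..<p}" and "p dvd y + t * x"
proof -
  have "coprime x p"
    using assms by (simp add: coprime_commute prime_imp_coprime)
  then obtain u where u: "[x * u = 1] (mod p)"
    using cong_solve_coprime_int by blast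
  define t where "t = (- y * u) mod p"
  have "[y + t * x = y + (- y * u) * x] (mod p)"
    unfolding t_def cong_def by (metis mod_add_right_eq mod_mult_left_eq)
  also have "y + (- y * u) * x = y * (1 - x * u)"
    by (simp add: algebra_simps)
  also have "[y * (1 - x * u) = y * 0] (mod p)"
    using u by (intro cong_mult cong_refl) (metis cong_diff cong_refl diff_self cong_sym)
  finally have "p dvd y + t * x"
    by (simp add: cong_0_iff)
  have "t \<in> {0..<p}"
    using prime_gt_0_int[OF assms(1)] unfolding t_def by simp
  from this \<open>p dvd y + t * x\<close> show thesis
    by (rule that)
qed

theorem mainTheorem1:
  fixes p :: int and x y :: int
  assumes "prime p" and "x \<in> {0..<p}" and "y \<in> {0..<p}"
  shows "(F_at p ^^ nat p) (x, y) = (0, 0)"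
proof (cases "x = 0 \<or> y = 0")
  case True
  then have "(F_at p ^^ 1) (x, y) = (0, 0)"
    by (simp add: F_at_axis)
  moreover have "1 \<le> nat p"
    using prime_ge_2_int[OF assms(1)] by simp
  ultimately show ?thesis
    by (rule funpow_F_at_absorbing)
next
  case False
  then have "\<not> p dvd x" and "\<not> p dvd y"
    using assms(2,3) by (auto simp: zdvd_not_zless)
  then obtain t where t: "t \<in> {0..<p}" and dvd: "p dvd y + t * x"
    using exists_residue_dvd_add_mult[OF assms(1)] by metis
  with \<open>\<not> p dvd y\<close> have "t \<noteq> 0"
    by auto
  define k where "k = nat t - 1"
  have k: "t = int (Suc k)"
    using t \<open>t \<noteq> 0\<close> unfolding k_def by simp
  have "(F_at p ^^ Suc (Suc k)) (x, y) = (0, 0)"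
    using dvd k by (intro funpow_F_at_vanishes) simp
  then show ?thesis
    using t k by (elim funpow_F_at_absorbing) simp
qed

end
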